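(* Let each $f_i:\mathbb{R}^d\to\mathbb{R}$, $i\in[n]$, be differentiable with $L$-Lipschitz gradient. Consider the iteration $X^{(s+1)} = (X^{(s)} - \eta_s\,\partial f(X^{(s)}))W^{(s)}$ for $s = t,\dots,t+H-1$, where $W^{(t)}$ is a minimizer of $\min_{W\in\mathcal{M}_w}\|\partial f(\overline{X}^{(t)})W - \overline{\partial f}(\overline{X}^{(t)})\|_F^2$ and $W^{(t+i)} = W^{(t)}$ for $0\le i\le H-1$. Then $$\big\|\partial f(\overline{X}^{(t+H)})W^{(t)} - \overline{\partial f}(\overline{X}^{(t+H)})\big\|_F^2 \leq 2\big\|\partial f(\overline{X}^{(t)})W^{(t)} - \overline{\partial f}(\overline{X}^{(t)})\big\|_F^2 + 2H\sum_{i=0}^{H-1}\eta_{t+i}^2L^2\|\partial f(X^{(t+i)})\|_F^2.$$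
   Context: $X^{(s)} = [\mathbf{x}_1^{(s)},\dots,\mathbf{x}_n^{(s)}]\in\mathbb{R}^{d\times n}$; $\partial f(X) = [\nabla f_1(\mathbf{x}_1),\dots,\nabla f_n(\mathbf{x}_n)]$; for $Y\in\mathbb{R}^{d\times n}$, $\overline{Y} = Y\frac{\mathbf{1}\mathbf{1}^\top}{n}$ and $\overline{\partial f}(X) = \partial f(X)\frac{\mathbf{1}\mathbf{1}^\top}{n}$. Given a graph $G=(V,E)$ on $n$ nodes, $\mathcal{M}_w = \{W\in\mathbb{R}^{n\times n}: W\mathbf{1} = \mathbf{1},\ \mathbf{1}^\top W = \mathbf{1}^\top,\ 0\le w_{ij}\le 1\ \forall i,j,\ w_{ij}=0\ \forall (i,j)\notin E\}$. *)

theory Defs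
  imports "HOL-Analysis.Analysis"
begin

text \<open>A d x n matrix is modelled as real^'n^'d (rows indexed by 'd, columns = nodes 'n).\<close>

definition frob_norm :: "real^'n^'m \<Rightarrow> real" where
  "frob_norm A = sqrt (\<Sum>i\<in>UNIV. \<Sum>j\<in>UNIV. (A$i$j)^2)"

definition pgrad :: "('n \<Rightarrow> real^'d \<Rightarrow> real^'d) \<Rightarrow> real^'n^'d \<Rightarrow> real^'n^'d" where
  "pgrad g X = (\<chi> r j. (g j (column j X)) $ r)"

definition avg_mat :: "real^'n^'n" where
  "avg_mat = (\<chi> i j. 1 / real CARD('n))"

definition bar :: "real^'n^'d \<Rightarrow> real^'n^'d" where
  "bar Y = Y ** avg_mat"

definition Mw :: "('n \<times> 'n) set \<Rightarrow> (real^'n^'n) set" where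
  "Mw E = {W. W *v (\<chi> i. 1) = (\<chi> i. 1) \<and> (\<chi> i. 1) v* W = (\<chi> i. 1)
             \<and> (\<forall>i j. 0 \<le> W$i$j \<and> W$i$j \<le> 1)
             \<and> (\<forall>i j. (i, j) \<notin> E \<longrightarrow> W$i$j = 0)}"

end

theory Submission
  imports Defs
begin

text \<open>Write P s for the gradient matrix at the averaged iterate bar (X s). Because W t is doubly
  stochastic, D W - bar D = (D - bar D) W has Frobenius norm at most that of D, so the left-hand side
  is at most twice the initial term plus twice the squared norm of P (t + H) - P t. Every column of
  bar (X s) is the node average of X s, which mixing with W t preserves; over the H steps it therefore
  moves by the sum of the averaged gradient steps, and the Lipschitz bound with Cauchy-Schwarz
  controls P (t + H) - P t.\<close>

lemma norm_vec_square:
  "(norm (x :: 'a::real_normed_vector^'n::finite))^2 = (\<Sum>i\<in>UNIV. (norm (x$i))^2)"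
  by (simp add: norm_vec_def L2_set_def sum_nonneg)

lemma norm_matrix_square:
  "(norm (A :: real^'n::finite^'m::finite))^2 = (\<Sum>i\<in>UNIV. \<Sum>j\<in>UNIV. (A$i$j)^2)"
  unfolding norm_vec_square[of A] by (simp add: norm_vec_square)

lemma frob_norm_eq_norm: "frob_norm A = norm A"
  by (simp add: frob_norm_def norm_matrix_square[symmetric])

lemma norm_matrix_square_columns:
  "(norm (A :: real^'n::finite^'m::finite))^2 = (\<Sum>j\<in>UNIV. (norm (column j A))^2)"
proof -
  have "(norm A)^2 = (\<Sum>j\<in>UNIV. \<Sum>i\<in>UNIV. (A$i$j)^2)"
    unfolding norm_matrix_square by (rule sum.swap)
  then show ?thesis
    by (simp add: norm_vec_square column_def)
qed

lemma norm_add_square_le: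
  fixes x y :: "'a::real_normed_vector"
  shows "(norm (x + y))^2 \<le> 2 * (norm x)^2 + 2 * (norm y)^2"
proof -
  have "(norm (x + y))^2 \<le> (norm x + norm y)^2"
    by (simp add: norm_triangle_ineq power_mono)
  also have "\<dots> \<le> 2 * (norm x)^2 + 2 * (norm y)^2"
    using zero_le_power2[of "norm x - norm y"] by (simp add: power2_eq_square algebra_simps)
  finally show ?thesis .
qed

lemma norm_sum_square_le:
  fixes v :: "'i \<Rightarrow> 'a::real_normed_vector"
  shows "(norm (\<Sum>i\<in>A. v i))^2 \<le> real (card A) * (\<Sum>i\<in>A. (norm (v i))^2)"
proof -
  have "(norm (\<Sum>i\<in>A. v i))^2 \<le> (\<Sum>i\<in>A. norm (v i))^2"
    by (simp add: norm_sum power_mono)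
  also have "\<dots> \<le> real (card A) * (\<Sum>i\<in>A. (norm (v i))^2)"
    using sum_squared_le_sum_of_squares[of "\<lambda>i. norm (v i)" A] by (simp add: mult.commute)
  finally show ?thesis .
qed

lemma Mw_row_sum: "W \<in> Mw E \<Longrightarrow> (\<Sum>j\<in>UNIV. W$i$j) = 1"
  unfolding Mw_def by (auto simp: vec_eq_iff matrix_vector_mult_def)

lemma Mw_column_sum: "W \<in> Mw E \<Longrightarrow> (\<Sum>i\<in>UNIV. W$i$j) = 1"
  unfolding Mw_def by (auto simp: vec_eq_iff vector_matrix_mult_def)

lemma Mw_nonneg: "W \<in> Mw E \<Longrightarrow> 0 \<le> W$i$j"
  unfolding Mw_def by auto

lemma square_weighted_sum_le:
  fixes w a :: "'a \<Rightarrow> real"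
  assumes "\<And>i. i \<in> I \<Longrightarrow> 0 \<le> w i"
  shows "(\<Sum>i\<in>I. w i * a i)^2 \<le> (\<Sum>i\<in>I. w i) * (\<Sum>i\<in>I. w i * (a i)^2)"
proof -
  have "(\<Sum>i\<in>I. w i * a i)^2 = (\<Sum>i\<in>I. sqrt (w i) * (sqrt (w i) * a i))^2"
    using assms by (simp add: mult.assoc[symmetric])
  also have "\<dots> \<le> (\<Sum>i\<in>I. (sqrt (w i))^2) * (\<Sum>i\<in>I. (sqrt (w i) * a i)^2)"
    by (rule Cauchy_Schwarz_ineq_sum)
  also have "\<dots> = (\<Sum>i\<in>I. w i) * (\<Sum>i\<in>I. w i * (a i)^2)"
    using assms by (simp add: power_mult_distrib)
  finally show ?thesis .
qed

lemma sum_square_mult_Mw_le: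
  fixes u :: "'n::finite \<Rightarrow> real"
  assumes W: "W \<in> Mw E"
  shows "(\<Sum>j\<in>UNIV. (\<Sum>i\<in>UNIV. u i * W$i$j)^2) \<le> (\<Sum>i\<in>UNIV. (u i)^2)"
proof -
  have "(\<Sum>j\<in>UNIV. (\<Sum>i\<in>UNIV. u i * W$i$j)^2) \<le> (\<Sum>j\<in>UNIV. \<Sum>i\<in>UNIV. W$i$j * (u i)^2)"
  proof (rule sum_mono)
    fix j
    have "(\<Sum>i\<in>UNIV. W$i$j * u i)^2 \<le> (\<Sum>i\<in>UNIV. W$i$j) * (\<Sum>i\<in>UNIV. W$i$j * (u i)^2)"
      by (rule square_weighted_sum_le) (simp add: Mw_nonneg[OF W])
    then show "(\<Sum>i\<in>UNIV. u i * W$i$j)^2 \<le> (\<Sum>i\<in>UNIV. W$i$j * (u i)^2)"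
      by (simp add: Mw_column_sum[OF W] mult.commute)
  qed
  also have "\<dots> = (\<Sum>i\<in>UNIV. (\<Sum>j\<in>UNIV. W$i$j) * (u i)^2)"
    by (subst sum.swap) (simp add: sum_distrib_right)
  also have "\<dots> = (\<Sum>i\<in>UNIV. (u i)^2)"
    by (simp add: Mw_row_sum[OF W])
  finally show ?thesis .
qed

lemma sum_square_minus_mean_le:
  fixes u :: "'a \<Rightarrow> real"
  shows "(\<Sum>i\<in>A. (u i - sum u A / card A)^2) \<le> (\<Sum>i\<in>A. (u i)^2)"
proof (cases "A = {} \<or> infinite A")
  case False
  define m where "m = sum u A / card A"
  have "sum u A = card A * m"
    using False by (simp add: m_def)
  then have "(\<Sum>i\<in>A. (u i - m)^2) = (\<Sum>i\<in>A. (u i)^2) - card A * m^2"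
    by (simp add: power2_diff sum.distrib sum_subtractf sum_distrib_left[symmetric]
        sum_distrib_right[symmetric] power2_eq_square algebra_simps)
  then show ?thesis
    by (simp add: m_def[symmetric])
qed auto

lemma bar_component: "bar D $ r $ j = (\<Sum>k\<in>UNIV. D$r$k) / real CARD('n::finite)"
  for D :: "real^'n^'d"
  by (simp add: bar_def matrix_matrix_mult_def avg_mat_def sum_divide_distrib)

lemma mult_Mw_minus_bar:
  assumes W: "W \<in> Mw E"
  shows "D ** W - bar D = (D - bar D) ** W"
proof -
  have "(\<Sum>k\<in>UNIV. bar D $ r $ k * W$k$j) = bar D $ r $ j * (\<Sum>k\<in>UNIV. W$k$j)" for r j
    by (simp add: bar_component sum_distrib_left)
  then have "(\<Sum>k\<in>UNIV. bar D $ r $ k * W$k$j) = bar D $ r $ j" for r j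
    by (simp add: Mw_column_sum[OF W])
  then show ?thesis
    by (simp add: vec_eq_iff matrix_matrix_mult_def algebra_simps sum_subtractf)
qed

lemma norm_mult_Mw_le:
  assumes W: "W \<in> Mw E"
  shows "norm (Y ** W) \<le> norm Y"
proof (rule power2_le_imp_le)
  show "(norm (Y ** W))^2 \<le> (norm Y)^2"
    unfolding norm_matrix_square
    by (rule sum_mono) (simp add: matrix_matrix_mult_def sum_square_mult_Mw_le[OF W])
qed simp

lemma norm_minus_bar_le: "norm (D - bar D) \<le> norm D"
proof (rule power2_le_imp_le)
  show "(norm (D - bar D))^2 \<le> (norm D)^2"
    unfolding norm_matrix_square
    by (rule sum_mono) (simp add: bar_component sum_square_minus_mean_le)
qed simp

lemma norm_mult_Mw_minus_bar_le:
  assumes W: "W \<in> Mw E"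
  shows "norm (D ** W - bar D) \<le> norm D"
  unfolding mult_Mw_minus_bar[OF W] using norm_mult_Mw_le[OF W] norm_minus_bar_le by (rule order_trans)

lemma norm_mult_Mw_minus_bar_perturb_square_le:
  assumes W: "W \<in> Mw E"
  shows "(norm (Q ** W - bar Q))^2 \<le> 2 * (norm (P ** W - bar P))^2 + 2 * (norm (Q - P))^2"
proof -
  have "Q ** W - bar Q = (P ** W - bar P) + ((Q - P) ** W - bar (Q - P))"
    by (simp add: bar_def vec_eq_iff matrix_matrix_mult_def sum_subtractf algebra_simps)
  then have "(norm (Q ** W - bar Q))^2
      \<le> 2 * (norm (P ** W - bar P))^2 + 2 * (norm ((Q - P) ** W - bar (Q - P)))^2"
    by (simp only: norm_add_square_le)
  also have "\<dots> \<le> 2 * (norm (P ** W - bar P))^2 + 2 * (norm (Q - P))^2"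
    using norm_mult_Mw_minus_bar_le[OF W, of "Q - P"] by (simp add: power_mono)
  finally show ?thesis .
qed

definition mean_column :: "real^'n::finite^'d \<Rightarrow> real^'d" where
  "mean_column X = (\<chi> r. (\<Sum>j\<in>UNIV. X$r$j) / real CARD('n))"

lemma column_bar: "column j (bar X) = mean_column X"
  by (simp add: column_def mean_column_def bar_component)

lemma mean_column_diff_scaleR:
  "mean_column (X - c *\<^sub>R Y) = mean_column X - c *\<^sub>R mean_column Y"
  by (simp add: mean_column_def vec_eq_iff sum_subtractf sum_distrib_left[symmetric] diff_divide_distrib)

lemma mean_column_mult_Mw:
  assumes W: "W \<in> Mw E"
  shows "mean_column (Y ** W) = mean_column Y"
proof -
  have "(\<Sum>j\<in>UNIV. (Y ** W)$r$j) = (\<Sum>k\<in>UNIV. Y$r$k * (\<Sum>j\<in>UNIV. W$k$j))" for r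
    unfolding matrix_matrix_mult_def sum_distrib_left vec_lambda_beta by (rule sum.swap)
  then show ?thesis
    by (simp add: mean_column_def Mw_row_sum[OF W])
qed

lemma norm_mean_column_square_le:
  "(norm (mean_column (X :: real^'n::finite^'d::finite)))^2 \<le> (norm X)^2 / real CARD('n)"
proof -
  have "(mean_column X $ r)^2 \<le> (\<Sum>j\<in>UNIV. (X$r$j)^2) / real CARD('n)" for r
  proof -
    have "(\<Sum>j\<in>UNIV. X$r$j)^2 \<le> (\<Sum>j\<in>UNIV. (X$r$j)^2) * real CARD('n)"
      by (rule sum_squared_le_sum_of_squares)
    then show ?thesis
      by (simp add: mean_column_def power_divide divide_simps power2_eq_square[of "real _"]
          mult.assoc mult_left_mono)
  qed
  then show ?thesis
    by (simp add: norm_matrix_square norm_vec_square[of "mean_column X"] sum_divide_distrib sum_mono)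
qed

lemma column_diff: "column j (A - B) = column j A - column j B"
  by (simp add: column_def vec_eq_iff)

lemma column_pgrad: "column j (pgrad g X) = g j (column j X)"
  by (simp add: column_def pgrad_def)

lemma norm_pgrad_bar_diff_square_le:
  fixes g :: "'n::finite \<Rightarrow> real^'d::finite \<Rightarrow> real^'d"
  assumes lip: "\<And>i x y. norm (g i x - g i y) \<le> L * dist x y"
  shows "(norm (pgrad g (bar X) - pgrad g (bar Y)))^2
    \<le> real CARD('n) * L^2 * (norm (mean_column X - mean_column Y))^2"
proof -
  have "(norm (pgrad g (bar X) - pgrad g (bar Y)))^2
      = (\<Sum>j\<in>UNIV. (norm (g j (mean_column X) - g j (mean_column Y)))^2)"
    unfolding norm_matrix_square_columns
    by (simp add: column_diff column_pgrad column_bar)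
  also have "\<dots> \<le> (\<Sum>j\<in>(UNIV::'n set). (L * norm (mean_column X - mean_column Y))^2)"
    by (rule sum_mono, rule power_mono) (use lip[unfolded dist_norm] in auto)
  also have "\<dots> = real CARD('n) * L^2 * (norm (mean_column X - mean_column Y))^2"
    by (simp add: power_mult_distrib)
  finally show ?thesis .
qed

lemma mean_column_iterates:
  fixes X G :: "nat \<Rightarrow> real^'n::finite^'d"
  assumes "\<And>s. t \<le> s \<Longrightarrow> s < t + k \<Longrightarrow> W s \<in> Mw E"
    and "\<And>s. t \<le> s \<Longrightarrow> s < t + k \<Longrightarrow> X (Suc s) = (X s - \<eta> s *\<^sub>R G s) ** W s"
  shows "mean_column (X (t + k)) = mean_column (X t) - (\<Sum>i<k. \<eta> (t + i) *\<^sub>R mean_column (G (t + i)))"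
  using assms
proof (induction k)
  case (Suc k)
  have "mean_column (X (t + Suc k)) = mean_column (X (t + k) - \<eta> (t + k) *\<^sub>R G (t + k))"
    using Suc.prems(2)[of "t + k"] mean_column_mult_Mw[OF Suc.prems(1)[of "t + k"]] by simp
  then show ?case
    using Suc by (simp add: mean_column_diff_scaleR)
qed simp

lemma mean_column_drift_square_le:
  fixes X G :: "nat \<Rightarrow> real^'n::finite^'d::finite"
  assumes W: "\<And>s. t \<le> s \<Longrightarrow> s < t + k \<Longrightarrow> W s \<in> Mw E"
    and step: "\<And>s. t \<le> s \<Longrightarrow> s < t + k \<Longrightarrow> X (Suc s) = (X s - \<eta> s *\<^sub>R G s) ** W s"
  shows "(norm (mean_column (X (t + k)) - mean_column (X t)))^2
    \<le> real k / real CARD('n) * (\<Sum>i<k. (\<eta> (t + i))^2 * (norm (G (t + i)))^2)"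
proof -
  have "(norm (mean_column (X (t + k)) - mean_column (X t)))^2
      = (norm (\<Sum>i<k. \<eta> (t + i) *\<^sub>R mean_column (G (t + i))))^2"
    using mean_column_iterates[of t k W E X \<eta> G, OF W step] by simp
  also have "\<dots> \<le> real k * (\<Sum>i<k. (\<eta> (t + i))^2 * (norm (mean_column (G (t + i))))^2)"
    using norm_sum_square_le[of "\<lambda>i. \<eta> (t + i) *\<^sub>R mean_column (G (t + i))" "{..<k}"]
    by (simp add: power_mult_distrib)
  also have "\<dots> \<le> real k * (\<Sum>i<k. (\<eta> (t + i))^2 * ((norm (G (t + i)))^2 / real CARD('n)))"
    by (intro mult_left_mono sum_mono norm_mean_column_square_le) simp_all
  also have "\<dots> = real k / real CARD('n) * (\<Sum>i<k. (\<eta> (t + i))^2 * (norm (G (t + i)))^2)"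
    by (simp add: sum_divide_distrib[symmetric])
  finally show ?thesis .
qed

theorem proposition1:
  fixes f :: "'n::finite \<Rightarrow> real^'d::finite \<Rightarrow> real"
    and g :: "'n \<Rightarrow> real^'d \<Rightarrow> real^'d"
    and L :: real
    and E :: "('n \<times> 'n) set"
    and X :: "nat \<Rightarrow> real^'n^'d"
    and W :: "nat \<Rightarrow> real^'n^'n"
    and \<eta> :: "nat \<Rightarrow> real"
    and t H :: nat
  assumes grad: "\<And>i x. GDERIV (f i) x :> g i x"
    and lip: "\<And>i x y. norm (g i x - g i y) \<le> L * dist x y"
    and Wmin: "W t \<in> Mw E"
      "\<And>V. V \<in> Mw E \<Longrightarrow>
         (frob_norm (pgrad g (bar (X t)) ** W t - bar (pgrad g (bar (X t)))))^2
         \<le> (frob_norm (pgrad g (bar (X t)) ** V - bar (pgrad g (bar (X t)))))^2"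
    and Wconst: "\<And>i. i < H \<Longrightarrow> W (t + i) = W t"
    and iter: "\<And>s. t \<le> s \<Longrightarrow> s < t + H \<Longrightarrow>
        X (Suc s) = (X s - \<eta> s *\<^sub>R pgrad g (X s)) ** W s"
  shows "(frob_norm (pgrad g (bar (X (t + H))) ** W t - bar (pgrad g (bar (X (t + H))))))^2
    \<le> 2 * (frob_norm (pgrad g (bar (X t)) ** W t - bar (pgrad g (bar (X t)))))^2
      + 2 * real H * (\<Sum>i<H. (\<eta> (t + i))^2 * L^2 * (frob_norm (pgrad g (X (t + i))))^2)"
proof -
  let ?P = "\<lambda>s. pgrad g (bar (X s))"
  have W: "W s \<in> Mw E" if "t \<le> s" "s < t + H" for s
    using Wmin(1) Wconst[of "s - t"] that by simp
  have "(norm (?P (t + H) - ?P t))^2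
      \<le> real CARD('n) * L^2 * (norm (mean_column (X (t + H)) - mean_column (X t)))^2"
    by (rule norm_pgrad_bar_diff_square_le[OF lip])
  also have "\<dots> \<le> real CARD('n) * L^2
      * (real H / real CARD('n) * (\<Sum>i<H. (\<eta> (t + i))^2 * (norm (pgrad g (X (t + i))))^2))"
    by (intro mult_left_mono mean_column_drift_square_le[of t H W E X \<eta> "\<lambda>s. pgrad g (X s)", OF W iter])
      simp_all
  also have "\<dots> = real H * (\<Sum>i<H. (\<eta> (t + i))^2 * L^2 * (norm (pgrad g (X (t + i))))^2)"
    by (simp add: sum_distrib_left mult_ac)
  finally have "(norm (?P (t + H) - ?P t))^2
      \<le> real H * (\<Sum>i<H. (\<eta> (t + i))^2 * L^2 * (norm (pgrad g (X (t + i))))^2)" .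
  then show ?thesis
    using norm_mult_Mw_minus_bar_perturb_square_le[OF Wmin(1), of "?P (t + H)" "?P t"]
    by (simp add: frob_norm_eq_norm)
qed

end
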